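(* Let $X,Y$ be finite abelian groups, $Q\in M_{X\times Y}(\mathbb T)$, and for $i\in X$, $c\in Y$ let $P_c^{(i)}=\sum_{a\in Y}\sum_{j\in X}L_{ac}W_{ia,j0}\in M_{X\times Y}(\mathbb C)$ (the image of $c^{(i)}=\sum_aL_{ac}u^{(i)}_{a0}$). For $k\in X$, $e\in Y$ let $\varepsilon_{ke}=\sum_{x\in X}F_{xk}e_{xe}$, where $(e_{xe})$ is the standard basis of $\mathbb C^{X\times Y}$. Then $$P_c^{(i)}(\varepsilon_{ke})=\frac{Q_{i,e-c}Q_{i-k,e}}{Q_{ie}Q_{i-k,e-c}}\,\varepsilon_{k,e-c}.$$ In particular, if $c_1+\dots+c_s=0$, then $P_{c_1}^{(i_1)}\cdots P_{c_s}^{(i_s)}$ is diagonal in the basis $(\varepsilon_{ke})$, for any $i_1,\dots,i_s\in X$.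
   Context: Finite abelian groups are written additively. For a finite abelian group $Z\simeq\mathbb Z_{N_1}\times\cdots\times\mathbb Z_{N_s}$, $F_Z=F_{N_1}\otimes\cdots\otimes F_{N_s}$ with $F_n=(e^{2\pi ijk/n})_{j,k\in\mathbb Z_n}$. Let $F=F_X$, $L=F_Y$, $M=|X|$, $N=|Y|$, and define $W_{ia,jb}\in M_{X\times Y}(\mathbb C)$ by $(W_{ia,jb})_{kc,ld}=\frac{1}{MN}\frac{Q_{ic}Q_{jd}}{Q_{id}Q_{jc}}F_{i-j,k-l}L_{a-b,c-d}$ ($i,j,k,l\in X$, $a,b,c,d\in Y$). *)

theory Defs
  imports Complex_Main
begin

text \<open>A finite abelian group Z = Z_{N_1} x ... x Z_{N_s} is represented by the list
  of moduli ns = [N_1,...,N_s]; its elements are lists of residues.\<close>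

definition grp :: "nat list \<Rightarrow> nat list set" where
  "grp ns = {x. length x = length ns \<and> (\<forall>t<length ns. x ! t < ns ! t)}"

definition gzero :: "nat list \<Rightarrow> nat list" where
  "gzero ns = replicate (length ns) 0"

definition gadd :: "nat list \<Rightarrow> nat list \<Rightarrow> nat list \<Rightarrow> nat list" where
  "gadd ns x y = map (\<lambda>t. (x ! t + y ! t) mod (ns ! t)) [0..<length ns]"

definition gneg :: "nat list \<Rightarrow> nat list \<Rightarrow> nat list" where
  "gneg ns x = map (\<lambda>t. (ns ! t - x ! t) mod (ns ! t)) [0..<length ns]"

definition gsub :: "nat list \<Rightarrow> nat list \<Rightarrow> nat list \<Rightarrow> nat list" where
  "gsub ns x y = gadd ns x (gneg ns y)"

definition fourier :: "nat list \<Rightarrow> nat list \<Rightarrow> nat list \<Rightarrow> complex" where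
  "fourier ns j k = (\<Prod>t<length ns. cis (2 * pi * real (j ! t * k ! t) / real (ns ! t)))"

type_synonym idx = "nat list \<times> nat list"

definition matvec :: "nat list \<Rightarrow> nat list \<Rightarrow> (idx \<Rightarrow> idx \<Rightarrow> complex) \<Rightarrow> (idx \<Rightarrow> complex) \<Rightarrow> idx \<Rightarrow> complex" where
  "matvec ns ms A v = (\<lambda>r. \<Sum>s\<in>grp ns \<times> grp ms. A r s * v s)"

definition Wmat :: "nat list \<Rightarrow> nat list \<Rightarrow> (nat list \<Rightarrow> nat list \<Rightarrow> complex)
    \<Rightarrow> nat list \<Rightarrow> nat list \<Rightarrow> nat list \<Rightarrow> nat list \<Rightarrow> idx \<Rightarrow> idx \<Rightarrow> complex" where
  "Wmat ns ms Q i a j b = (\<lambda>(k, c) (l, d).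
     1 / (of_nat (card (grp ns)) * of_nat (card (grp ms)))
     * (Q i c * Q j d / (Q i d * Q j c))
     * fourier ns (gsub ns i j) (gsub ns k l) * fourier ms (gsub ms a b) (gsub ms c d))"

definition Pmat :: "nat list \<Rightarrow> nat list \<Rightarrow> (nat list \<Rightarrow> nat list \<Rightarrow> complex)
    \<Rightarrow> nat list \<Rightarrow> nat list \<Rightarrow> idx \<Rightarrow> idx \<Rightarrow> complex" where
  "Pmat ns ms Q i c = (\<lambda>r s. \<Sum>a\<in>grp ms. \<Sum>j\<in>grp ns.
      fourier ms a c * Wmat ns ms Q i a j (gzero ms) r s)"

definition eps :: "nat list \<Rightarrow> nat list \<Rightarrow> nat list \<Rightarrow> idx \<Rightarrow> complex" where
  "eps ns k e = (\<lambda>(x, e'). if e' = e then fourier ns x k else 0)"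

definition Pprod_apply :: "nat list \<Rightarrow> nat list \<Rightarrow> (nat list \<Rightarrow> nat list \<Rightarrow> complex)
    \<Rightarrow> (nat list \<times> nat list) list \<Rightarrow> (idx \<Rightarrow> complex) \<Rightarrow> idx \<Rightarrow> complex" where
  "Pprod_apply ns ms Q ics v = foldr (\<lambda>(i, c) w. matvec ns ms (Pmat ns ms Q i c) w) ics v"

end

theory Submission
  imports Defs
begin

text \<open>Each entry of P_c^(i) is a character sum over Y times a sum over j in X. Applied to
  eps_ke, orthogonality of the characters of Y forces the second output index to be e - c, and
  orthogonality of the characters of X, after convolving over the first index, kills every j except
  j = i - k; the Q-quotient at that j is the eigenvalue. Hence each factor of a product maps eps_ke
  to a multiple of eps_k,e-c, and when the c's add up to 0 the shifts cancel.\<close>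

definition unit_root :: "nat \<Rightarrow> int \<Rightarrow> complex" where
  "unit_root n a = cis (2 * pi * of_int a / real n)"

lemma unit_root_add: "unit_root n (a + b) = unit_root n a * unit_root n b"
  by (simp add: unit_root_def cis_mult add_divide_distrib distrib_left)

lemma unit_root_power: "unit_root n a ^ m = unit_root n (int m * a)"
  by (simp add: unit_root_def DeMoivre mult_ac)

lemma unit_root_eq_1_iff:
  assumes "0 < n"
  shows "unit_root n a = 1 \<longleftrightarrow> int n dvd a"
proof
  assume "unit_root n a = 1"
  then have "cos (2 * pi * of_int a / real n) = 1"
    by (auto simp: unit_root_def complex_eq_iff)
  then obtain k :: int where "2 * pi * of_int a / real n = of_int k * 2 * pi"
    by (auto simp: cos_one_2pi_int)
  then have "real_of_int a = real n * of_int k"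
    using assms by (simp add: field_simps)
  then have "a = int n * k"
    by (metis of_int_eq_iff of_int_mult of_int_of_nat_eq)
  then show "int n dvd a" by simp
next
  assume "int n dvd a"
  then obtain k where "a = int n * k" by blast
  then have "2 * pi * of_int a / real n = 2 * pi * of_int k"
    using assms by simp
  then show "unit_root n a = 1"
    by (simp add: unit_root_def)
qed

lemma unit_root_cong:
  assumes "0 < n" "a mod int n = b mod int n"
  shows "unit_root n a = unit_root n b"
proof -
  have "int n dvd a - b" using assms(2) by (simp add: mod_eq_dvd_iff)
  then have "unit_root n (a - b) = 1" using assms(1) by (simp add: unit_root_eq_1_iff)
  then show ?thesis using unit_root_add[of n "a - b" b] by simp
qed

lemma sum_unit_root:
  assumes "0 < n"
  shows "(\<Sum>a<n. unit_root n (int a * u)) = (if int n dvd u then of_nat n else 0)"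
proof (cases "int n dvd u")
  case True
  then have "unit_root n (int a * u) = 1" for a
    using assms by (simp add: unit_root_eq_1_iff)
  then show ?thesis
    using True by simp
next
  case False
  define w where "w = unit_root n u"
  have "w \<noteq> 1" using False assms by (simp add: w_def unit_root_eq_1_iff)
  have "(\<Sum>a<n. unit_root n (int a * u)) = (\<Sum>a<n. w ^ a)"
    by (simp add: w_def unit_root_power)
  also have "\<dots> = (w ^ n - 1) / (w - 1)"
    using \<open>w \<noteq> 1\<close> by (rule geometric_sum)
  also have "w ^ n = 1"
    using assms by (simp add: w_def unit_root_power unit_root_eq_1_iff)
  finally show ?thesis using False by simp
qed

lemma grp_Nil: "grp [] = {[]}"
  by (auto simp: grp_def)

lemma grp_Cons: "grp (n # ns) = (\<lambda>(a, x). a # x) ` ({..<n} \<times> grp ns)"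
proof (intro set_eqI iffI)
  fix z assume z: "z \<in> grp (n # ns)"
  then obtain a x where "z = a # x" by (cases z) (auto simp: grp_def)
  with z show "z \<in> (\<lambda>(a, x). a # x) ` ({..<n} \<times> grp ns)"
    by (fastforce simp: grp_def)
qed (auto simp: grp_def nth_Cons split: nat.splits)

lemma inj_on_Cons_pair: "inj_on (\<lambda>(a, x). a # x) A"
  by (auto simp: inj_on_def)

lemma finite_grp: "finite (grp ns)"
  by (induction ns) (auto simp: grp_Nil grp_Cons)

lemma card_grp_Cons: "card (grp (n # ns)) = n * card (grp ns)"
  by (simp add: grp_Cons card_image[OF inj_on_Cons_pair] card_cartesian_product)

lemma sum_grp_Cons: "(\<Sum>z\<in>grp (n # ns). f z) = (\<Sum>a<n. \<Sum>x\<in>grp ns. f (a # x))"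
  unfolding grp_Cons sum.reindex[OF inj_on_Cons_pair]
  by (simp add: sum.cartesian_product split_def)

lemma gzero_in_grp: "\<forall>t<length ns. 0 < ns ! t \<Longrightarrow> gzero ns \<in> grp ns"
  by (simp add: grp_def gzero_def)

lemma gadd_in_grp: "\<forall>t<length ns. 0 < ns ! t \<Longrightarrow> gadd ns x y \<in> grp ns"
  by (simp add: grp_def gadd_def)

lemma gsub_in_grp: "\<forall>t<length ns. 0 < ns ! t \<Longrightarrow> gsub ns x y \<in> grp ns"
  by (simp add: gsub_def gadd_in_grp)

lemma card_grp_pos: "\<forall>t<length ns. 0 < ns ! t \<Longrightarrow> 0 < card (grp ns)"
  using gzero_in_grp finite_grp card_gt_0_iff by blast

lemma int_gzero_nth: "t < length ns \<Longrightarrow> int (gzero ns ! t) = 0"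
  by (simp add: gzero_def)

lemma int_gadd_nth:
  "t < length ns \<Longrightarrow> int (gadd ns x y ! t) = (int (x ! t) + int (y ! t)) mod int (ns ! t)"
  by (simp add: gadd_def zmod_int)

lemma int_gsub_nth:
  assumes "t < length ns" "y \<in> grp ns"
  shows "int (gsub ns x y ! t) = (int (x ! t) - int (y ! t)) mod int (ns ! t)"
proof -
  have "y ! t \<le> ns ! t" using assms by (simp add: grp_def less_imp_le)
  then have "int (gneg ns y ! t) = (- int (y ! t)) mod int (ns ! t)"
    using assms(1) by (simp add: gneg_def zmod_int of_nat_diff mod_diff_left_eq[symmetric])
  then show ?thesis
    using assms(1) by (simp add: gsub_def int_gadd_nth mod_add_right_eq)
qed

lemma int_nth_mod_grp:
  assumes "x \<in> grp ns" "t < length ns"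
  shows "int (x ! t) mod int (ns ! t) = int (x ! t)"
  using assms by (simp add: grp_def)

lemma grp_eq_iff_mod:
  assumes "x \<in> grp ns" "y \<in> grp ns"
  shows "x = y \<longleftrightarrow> (\<forall>t<length ns. int (x ! t) mod int (ns ! t) = int (y ! t) mod int (ns ! t))"
  using assms by (auto simp: int_nth_mod_grp grp_def intro: nth_equalityI)

lemma grp_eqI_mod:
  assumes "x \<in> grp ns" "y \<in> grp ns"
    and "\<And>t. t < length ns \<Longrightarrow> int (x ! t) mod int (ns ! t) = int (y ! t) mod int (ns ! t)"
  shows "x = y"
  using assms grp_eq_iff_mod by blast

lemma sum_grp_prod_unit_root:
  assumes "\<forall>t<length ns. 0 < ns ! t"
  shows "(\<Sum>x\<in>grp ns. \<Prod>t<length ns. unit_root (ns ! t) (int (x ! t) * u t))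
    = (if \<forall>t<length ns. int (ns ! t) dvd u t then of_nat (card (grp ns)) else 0)"
  using assms
proof (induction ns arbitrary: u)
  case Nil
  then show ?case by (simp add: grp_Nil)
next
  case (Cons n ns)
  have "0 < n" using Cons.prems by auto
  have IH: "(\<Sum>x\<in>grp ns. \<Prod>t<length ns. unit_root (ns ! t) (int (x ! t) * u (Suc t)))
    = (if \<forall>t<length ns. int (ns ! t) dvd u (Suc t) then of_nat (card (grp ns)) else 0)"
    using Cons.IH[of "\<lambda>t. u (Suc t)"] Cons.prems by fastforce
  have "(\<Sum>x\<in>grp (n # ns). \<Prod>t<length (n # ns). unit_root ((n # ns) ! t) (int (x ! t) * u t))
    = (\<Sum>a<n. unit_root n (int a * u 0))
      * (\<Sum>x\<in>grp ns. \<Prod>t<length ns. unit_root (ns ! t) (int (x ! t) * u (Suc t)))"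
    unfolding sum_grp_Cons length_Cons prod.lessThan_Suc_shift by (simp add: sum_product)
  then show ?case
    unfolding IH sum_unit_root[OF \<open>0 < n\<close>] card_grp_Cons
    by (auto simp: All_less_Suc2)
qed

lemma fourier_eq_prod_unit_root:
  "fourier ns x y = (\<Prod>t<length ns. unit_root (ns ! t) (int (x ! t) * int (y ! t)))"
  by (simp add: fourier_def unit_root_def)

lemma fourier_commute: "fourier ns x y = fourier ns y x"
  by (simp add: fourier_def mult.commute)

context
  fixes ns :: "nat list"
  assumes pos: "\<forall>t<length ns. 0 < ns ! t"
begin

lemma grp_closed [simp]:
  "gzero ns \<in> grp ns" "gadd ns x y \<in> grp ns" "gsub ns x y \<in> grp ns"
  using pos by (simp_all add: gzero_in_grp gadd_in_grp gsub_in_grp)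

lemma gsub_gzero_right: "x \<in> grp ns \<Longrightarrow> gsub ns x (gzero ns) = x"
  by (rule grp_eqI_mod[where ns = ns]) (simp_all add: int_gsub_nth int_gzero_nth)

lemma gadd_gsub_cancel: "y \<in> grp ns \<Longrightarrow> z \<in> grp ns \<Longrightarrow> gadd ns (gsub ns y z) z = y"
  by (rule grp_eqI_mod[where ns = ns]) (simp_all add: int_gsub_nth int_gadd_nth mod_simps)

lemma gsub_gsub:
  assumes "x \<in> grp ns" "y \<in> grp ns" "z \<in> grp ns"
  shows "gsub ns (gsub ns x y) z = gsub ns x (gadd ns z y)"
  using assms
  by (intro grp_eqI_mod[where ns = ns])
    (simp_all add: int_gsub_nth int_gadd_nth mod_simps diff_diff_eq add.commute)

lemma gsub_eq_iff_eq_gsub: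
  assumes "i \<in> grp ns" "j \<in> grp ns" "k \<in> grp ns"
  shows "gsub ns i j = k \<longleftrightarrow> j = gsub ns i k"
  using assms
  by (simp add: grp_eq_iff_mod[where ns = ns] int_gsub_nth mod_simps mod_eq_dvd_iff)
    (metis dvd_diff_commute diff_diff_eq2 diff_right_commute)

lemma gsub_gsub_cancel: "i \<in> grp ns \<Longrightarrow> k \<in> grp ns \<Longrightarrow> gsub ns i (gsub ns i k) = k"
  by (simp add: gsub_eq_iff_eq_gsub)

lemma gadd_gsub_eq_gzero_iff:
  assumes "c \<in> grp ns" "d \<in> grp ns" "e \<in> grp ns"
  shows "gadd ns c (gsub ns d e) = gzero ns \<longleftrightarrow> d = gsub ns e c"
  using assms
  by (simp add: grp_eq_iff_mod[where ns = ns] int_gsub_nth int_gadd_nth int_gzero_nth mod_simps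
      mod_eq_dvd_iff dvd_eq_mod_eq_0[symmetric] algebra_simps)

lemma sum_fourier:
  assumes "y \<in> grp ns"
  shows "(\<Sum>x\<in>grp ns. fourier ns x y) = (if y = gzero ns then of_nat (card (grp ns)) else 0)"
proof -
  have "(\<forall>t<length ns. int (ns ! t) dvd int (y ! t)) \<longleftrightarrow> y = gzero ns"
    using assms by (auto simp: grp_def gzero_def intro!: nth_equalityI)
      (meson nat_dvd_not_less neq0_conv)
  then show ?thesis
    by (simp add: fourier_eq_prod_unit_root sum_grp_prod_unit_root[OF pos])
qed

lemma fourier_mult_right: "fourier ns x y * fourier ns x z = fourier ns x (gadd ns y z)"
  unfolding fourier_eq_prod_unit_root prod.distrib[symmetric] unit_root_add[symmetric]
  using pos by (intro prod.cong refl unit_root_cong)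
    (simp_all add: int_gadd_nth mod_simps distrib_left)

lemma fourier_gsub_mult_right:
  "y \<in> grp ns \<Longrightarrow> z \<in> grp ns \<Longrightarrow> fourier ns x (gsub ns y z) * fourier ns x z = fourier ns x y"
  by (simp add: fourier_mult_right gadd_gsub_cancel)

lemma sum_fourier_mult_fourier:
  "(\<Sum>a\<in>grp ns. fourier ns a c * fourier ns a d)
    = (if gadd ns c d = gzero ns then of_nat (card (grp ns)) else 0)"
  by (simp add: fourier_mult_right sum_fourier)

lemma sum_fourier_gsub_mult_fourier:
  assumes x: "x \<in> grp ns" and k: "k \<in> grp ns" and k': "k' \<in> grp ns"
  shows "(\<Sum>l\<in>grp ns. fourier ns x (gsub ns k' l) * fourier ns l k)
    = (if x = k then of_nat (card (grp ns)) * fourier ns x k' else 0)"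
proof -
  have "fourier ns x (gsub ns k' l) * fourier ns l k = fourier ns x k' * fourier ns l (gsub ns k x)"
    if l: "l \<in> grp ns" for l
  proof -
    have "fourier ns x (gsub ns k' l) * fourier ns l k
        = fourier ns x (gsub ns k' l) * (fourier ns l (gsub ns k x) * fourier ns l x)"
      using x k by (simp add: fourier_gsub_mult_right)
    also have "\<dots> = (fourier ns x (gsub ns k' l) * fourier ns x l) * fourier ns l (gsub ns k x)"
      by (simp add: fourier_commute[of ns l x] mult_ac)
    finally show ?thesis
      using l k' by (simp add: fourier_gsub_mult_right)
  qed
  moreover have "gsub ns k x = gzero ns \<longleftrightarrow> x = k"
    using x k by (simp add: gsub_eq_iff_eq_gsub gsub_gzero_right)
  ultimately show ?thesis
    by (simp add: sum_distrib_left[symmetric] sum_fourier)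
qed

end

lemma matvec_eps:
  assumes "e \<in> grp ms"
  shows "matvec ns ms A (eps ns k e) r = (\<Sum>l\<in>grp ns. A r (l, e) * fourier ns l k)"
proof -
  have "(\<Sum>d\<in>grp ms. A r (l, d) * eps ns k e (l, d)) = A r (l, e) * fourier ns l k" for l
    using assms by (simp add: eps_def finite_grp if_distrib cong: if_cong)
  then show ?thesis
    by (simp add: matvec_def sum.cartesian_product')
qed

lemma Pmat_entry:
  assumes pm: "\<forall>t<length ms. 0 < ms ! t"
    and c: "c \<in> grp ms" and c': "c' \<in> grp ms" and e: "e \<in> grp ms"
  shows "Pmat ns ms Q i c (k', c') (l, e)
    = (if c' = gsub ms e c
       then (\<Sum>j\<in>grp ns. Q i c' * Q j e / (Q i e * Q j c') * fourier ns (gsub ns i j) (gsub ns k' l))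
            / of_nat (card (grp ns))
       else 0)"
proof -
  define M where "M = card (grp ns)"
  define N where "N = card (grp ms)"
  define w where "w j = Q i c' * Q j e / (Q i e * Q j c') * fourier ns (gsub ns i j) (gsub ns k' l)" for j
  have "Pmat ns ms Q i c (k', c') (l, e)
      = (\<Sum>a\<in>grp ms. \<Sum>j\<in>grp ns. fourier ms a c * fourier ms a (gsub ms c' e) * w j)
        / (of_nat M * of_nat N)"
    unfolding Pmat_def Wmat_def w_def M_def N_def sum_divide_distrib
    by (intro sum.cong refl) (simp add: gsub_gzero_right[OF pm] mult_ac)
  also have "\<dots> = (\<Sum>j\<in>grp ns. (\<Sum>a\<in>grp ms. fourier ms a c * fourier ms a (gsub ms c' e)) * w j)
        / (of_nat M * of_nat N)"
    by (simp add: sum.swap[of _ "grp ms"] sum_distrib_right)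
  also have "\<dots> = (if c' = gsub ms e c then of_nat N * (\<Sum>j\<in>grp ns. w j) else 0) / (of_nat M * of_nat N)"
    by (simp add: sum_fourier_mult_fourier[OF pm] gadd_gsub_eq_gzero_iff[OF pm] gsub_in_grp[OF pm]
        c c' e N_def sum_distrib_left[symmetric])
  finally show ?thesis
    using card_grp_pos[OF pm] by (simp add: w_def M_def N_def)
qed

lemma matvec_Pmat_eps:
  assumes pn: "\<forall>t<length ns. 0 < ns ! t" and pm: "\<forall>t<length ms. 0 < ms ! t"
    and i: "i \<in> grp ns" and c: "c \<in> grp ms" and k: "k \<in> grp ns" and e: "e \<in> grp ms"
    and k': "k' \<in> grp ns" and c': "c' \<in> grp ms"
  shows "matvec ns ms (Pmat ns ms Q i c) (eps ns k e) (k', c')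
    = Q i (gsub ms e c) * Q (gsub ns i k) e / (Q i e * Q (gsub ns i k) (gsub ms e c))
      * eps ns k (gsub ms e c) (k', c')"
proof (cases "c' = gsub ms e c")
  case True
  define M where "M = card (grp ns)"
  define q where "q j = Q i c' * Q j e / (Q i e * Q j c')" for j
  have "matvec ns ms (Pmat ns ms Q i c) (eps ns k e) (k', c')
      = (\<Sum>l\<in>grp ns. \<Sum>j\<in>grp ns. q j * (fourier ns (gsub ns i j) (gsub ns k' l) * fourier ns l k)) / of_nat M"
    using True by (simp add: matvec_eps e Pmat_entry pm c c' q_def M_def
        sum_distrib_left sum_distrib_right sum_divide_distrib mult_ac)
  also have "\<dots> = (\<Sum>j\<in>grp ns. q j * (\<Sum>l\<in>grp ns. fourier ns (gsub ns i j) (gsub ns k' l) * fourier ns l k))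
      / of_nat M"
    by (subst sum.swap) (simp add: sum_distrib_left)
  also have "\<dots> = (\<Sum>j\<in>grp ns. if j = gsub ns i k then of_nat M * q j * fourier ns k k' else 0) / of_nat M"
    by (intro arg_cong[where f = "\<lambda>z. z / _"] sum.cong refl)
      (simp add: sum_fourier_gsub_mult_fourier pn gsub_in_grp gsub_eq_iff_eq_gsub gsub_gsub_cancel
        i k k' M_def)
  also have "\<dots> = q (gsub ns i k) * fourier ns k k'"
    using card_grp_pos[OF pn] by (simp add: gsub_in_grp[OF pn] finite_grp M_def card_gt_0_iff)
  finally show ?thesis
    using True by (simp add: q_def eps_def fourier_commute)
next
  case False
  then show ?thesis
    by (simp add: matvec_eps e Pmat_entry pm c c') (simp add: eps_def)
qed

lemma foldr_gadd_in_grp: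
  "\<forall>t<length ms. 0 < ms ! t \<Longrightarrow> foldr (gadd ms) cs (gzero ms) \<in> grp ms"
  by (cases cs) (simp_all add: gzero_in_grp gadd_in_grp)

lemma matvec_scaled:
  assumes "\<forall>s\<in>grp ns \<times> grp ms. v s = \<mu> * w s"
  shows "matvec ns ms A v r = \<mu> * matvec ns ms A w r"
proof -
  have "A r s * v s = \<mu> * (A r s * w s)" if "s \<in> grp ns \<times> grp ms" for s
    using assms that by (auto simp: mult.left_commute)
  then show ?thesis
    by (auto simp: matvec_def sum_distrib_left intro: sum.cong)
qed

lemma Pprod_apply_eps:
  assumes pn: "\<forall>t<length ns. 0 < ns ! t" and pm: "\<forall>t<length ms. 0 < ms ! t"
    and k: "k \<in> grp ns" and e: "e \<in> grp ms"
  shows "set ics \<subseteq> grp ns \<times> grp ms \<Longrightarrow> \<exists>\<mu>. \<forall>r\<in>grp ns \<times> grp ms.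
    Pprod_apply ns ms Q ics (eps ns k e) r
      = \<mu> * eps ns k (gsub ms e (foldr (gadd ms) (map snd ics) (gzero ms))) r"
proof (induction ics)
  case Nil
  show ?case
    by (intro exI[of _ 1]) (simp add: Pprod_apply_def gsub_gzero_right[OF pm e])
next
  case (Cons ic ics)
  obtain i c where ic: "ic = (i, c)" and i: "i \<in> grp ns" and c: "c \<in> grp ms"
    using Cons.prems by (cases ic) auto
  define S where "S = foldr (gadd ms) (map snd ics) (gzero ms)"
  define e' where "e' = gsub ms e S"
  have S: "S \<in> grp ms" and e': "e' \<in> grp ms"
    by (simp_all add: S_def e'_def foldr_gadd_in_grp[OF pm] gsub_in_grp[OF pm])
  obtain \<mu> where \<mu>: "\<forall>s\<in>grp ns \<times> grp ms. Pprod_apply ns ms Q ics (eps ns k e) s = \<mu> * eps ns k e' s"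
    using Cons by (auto simp: e'_def S_def)
  have "Pprod_apply ns ms Q ((i, c) # ics) (eps ns k e) r
      = (\<mu> * (Q i (gsub ms e' c) * Q (gsub ns i k) e' / (Q i e' * Q (gsub ns i k) (gsub ms e' c))))
        * eps ns k (gsub ms e (foldr (gadd ms) (map snd ((i, c) # ics)) (gzero ms))) r"
    if r: "r \<in> grp ns \<times> grp ms" for r
  proof -
    have "Pprod_apply ns ms Q ((i, c) # ics) (eps ns k e) r
        = \<mu> * matvec ns ms (Pmat ns ms Q i c) (eps ns k e') r"
      using matvec_scaled[OF \<mu>] by (simp add: Pprod_apply_def)
    moreover have "gsub ms e' c = gsub ms e (foldr (gadd ms) (map snd ((i, c) # ics)) (gzero ms))"
      using gsub_gsub[OF pm e S c] by (simp add: e'_def S_def)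
    ultimately show ?thesis
      using r by (auto simp: matvec_Pmat_eps[OF pn pm i c k e'])
  qed
  then show ?case
    unfolding ic by blast
qed

theorem lemma3p9:
  fixes ns ms :: "nat list" and Q :: "nat list \<Rightarrow> nat list \<Rightarrow> complex"
  assumes "\<forall>t<length ns. 0 < ns ! t"
    and "\<forall>t<length ms. 0 < ms ! t"
    and "\<forall>i\<in>grp ns. \<forall>c\<in>grp ms. cmod (Q i c) = 1"
  shows "(\<forall>i\<in>grp ns. \<forall>c\<in>grp ms. \<forall>k\<in>grp ns. \<forall>e\<in>grp ms. \<forall>r\<in>grp ns \<times> grp ms.
            matvec ns ms (Pmat ns ms Q i c) (eps ns k e) r
            = (Q i (gsub ms e c) * Q (gsub ns i k) e / (Q i e * Q (gsub ns i k) (gsub ms e c)))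
              * eps ns k (gsub ms e c) r)
       \<and> (\<forall>ics. set ics \<subseteq> grp ns \<times> grp ms \<longrightarrow>
            foldr (gadd ms) (map snd ics) (gzero ms) = gzero ms \<longrightarrow>
            (\<forall>k\<in>grp ns. \<forall>e\<in>grp ms. \<exists>\<mu>::complex. \<forall>r\<in>grp ns \<times> grp ms.
               Pprod_apply ns ms Q ics (eps ns k e) r = \<mu> * eps ns k e r))"
proof (intro conjI ballI allI impI)
  fix i c k e r
  assume "i \<in> grp ns" "c \<in> grp ms" "k \<in> grp ns" "e \<in> grp ms" "r \<in> grp ns \<times> grp ms"
  then show "matvec ns ms (Pmat ns ms Q i c) (eps ns k e) r
      = (Q i (gsub ms e c) * Q (gsub ns i k) e / (Q i e * Q (gsub ns i k) (gsub ms e c)))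
        * eps ns k (gsub ms e c) r"
    using matvec_Pmat_eps[OF assms(1,2)] by (cases r) auto
next
  fix ics k e
  assume ics: "set ics \<subseteq> grp ns \<times> grp ms"
    and sum_zero: "foldr (gadd ms) (map snd ics) (gzero ms) = gzero ms"
    and k: "k \<in> grp ns" and e: "e \<in> grp ms"
  show "\<exists>\<mu>::complex. \<forall>r\<in>grp ns \<times> grp ms. Pprod_apply ns ms Q ics (eps ns k e) r = \<mu> * eps ns k e r"
    using Pprod_apply_eps[OF assms(1,2) k e ics, of Q]
    unfolding sum_zero gsub_gzero_right[OF assms(2) e] .
qed

end
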